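(* The quantum-braided planes ${\mathfrak c}_q^2$ and $({\mathfrak c}_q^2)^*$ are dually paired by $\langle e_1^r e_2^s, f_1^{r'} f_2^{s'}\rangle = \delta_{r,r'}\delta_{s,s'}[r]_{q}![s]_{q}!$.
   Context: $q$ is a primitive $n$-th root of unity with $n=2m+1$ such that $\beta^2=3$ has a solution mod $n$. ${\mathfrak c}_q^2$ is the braided-Hopf algebra generated by $e_1,e_2$ with $e_1^n=e_2^n=0$, $e_2e_1=q^{-m}e_1e_2$, $\underline\Delta e_i=e_i\otimes1+1\otimes e_i$, $\underline\epsilon e_i=0$, $\underline S e_i=-e_i$, braiding $\Psi(e_i\otimes e_i)=qe_i\otimes e_i$, $\Psi(e_1\otimes e_2)=q^{-m}e_2\otimes e_1$, $\Psi(e_2\otimes e_1)=q^{-m}e_1\otimes e_2+(q-1)e_2\otimes e_1$ (living in right modules of $\widetilde{{\mathfrak u}_q(sl_2)}={\mathfrak u}_q(sl_2)\otimes\mathbb{C}[g]/(g^n-1)$). Its dual $({\mathfrak c}_q^2)^*$ is generated by $f_1,f_2$ with the same relations $f_2f_1=q^{-m}f_1f_2$, $f_i^n=0$ and additive braided coproduct, with pairing determined by $\langle e_i,f_j\rangle=\delta_{ij}$. Here $[r]_q=(1-q^r)/(1-q)$ and $[r]_q!=[r]_q[r-1]_q\cdots[1]_q$, $[0]_q!=1$. *)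

theory Defs
  imports Complex_Main "HOL-Number_Theory.Cong"
begin

text \<open>Elements of the quantum-braided plane (and of its dual, which has the same
  relations) are represented by their coefficient functions with respect to the
  PBW basis: x a b is the coefficient of e1^a e2^b (resp. f1^a f2^b), 0 <= a,b < n.
  Elements of the tensor square are coefficient functions of four indices:
  T a b c d is the coefficient of e1^a e2^b (x) e1^c e2^d.\<close>

type_synonym cq_elt = "nat \<Rightarrow> nat \<Rightarrow> complex"
type_synonym cq_elt2 = "nat \<Rightarrow> nat \<Rightarrow> nat \<Rightarrow> nat \<Rightarrow> complex"

definition qint :: "complex \<Rightarrow> nat \<Rightarrow> complex" where
  "qint q r = (1 - q ^ r) / (1 - q)"

definition qfact :: "complex \<Rightarrow> nat \<Rightarrow> complex" where
  "qfact q r = (\<Prod>i\<in>{1..r}. qint q i)"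

definition qbinom :: "complex \<Rightarrow> nat \<Rightarrow> nat \<Rightarrow> complex" where
  "qbinom q r k = (if k \<le> r then qfact q r / (qfact q k * qfact q (r - k)) else 0)"

definition mono :: "nat \<Rightarrow> nat \<Rightarrow> cq_elt" where
  "mono r s = (\<lambda>a b. if a = r \<and> b = s then 1 else 0)"

text \<open>product, from e2 e1 = q^(-m) e1 e2 and e_i^n = 0:
  (e1^a e2^b)(e1^c e2^d) = q^(-m b c) e1^(a+c) e2^(b+d)\<close>
definition cq_mult :: "nat \<Rightarrow> complex \<Rightarrow> nat \<Rightarrow> cq_elt \<Rightarrow> cq_elt \<Rightarrow> cq_elt" where
  "cq_mult n q m x y = (\<lambda>c d. if c < n \<and> d < n then
      (\<Sum>a\<in>{..c}. \<Sum>b\<in>{..d}. x a b * y (c - a) (d - b) * (inverse q ^ m) ^ (b * (c - a)))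
    else 0)"

definition cq_unit :: cq_elt where
  "cq_unit = mono 0 0"

definition cq_counit :: "cq_elt \<Rightarrow> complex" where
  "cq_counit x = x 0 0"

text \<open>braided coproduct (additive on generators, extended as an algebra map into
  the braided tensor product, using Psi(e1 (x) e1) = q e1 (x) e1 and
  Psi(e1 (x) e2) = q^(-m) e2 (x) e1):
  Delta(e1^r e2^s) = sum_{k,j} [r;k]_q [s;j]_q q^(-m (r-k) j) e1^k e2^j (x) e1^(r-k) e2^(s-j)\<close>
definition cq_coprod :: "nat \<Rightarrow> complex \<Rightarrow> nat \<Rightarrow> cq_elt \<Rightarrow> cq_elt2" where
  "cq_coprod n q m x = (\<lambda>a b c d. if a + c < n \<and> b + d < n then
      x (a + c) (b + d) * qbinom q (a + c) a * qbinom q (b + d) b * (inverse q ^ m) ^ (c * b)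
    else 0)"

definition bil :: "nat \<Rightarrow> cq_elt2 \<Rightarrow> cq_elt \<Rightarrow> cq_elt \<Rightarrow> complex" where
  "bil n G x y = (\<Sum>a<n. \<Sum>b<n. \<Sum>c<n. \<Sum>d<n. G a b c d * x a b * y c d)"

definition bil2_right :: "nat \<Rightarrow> cq_elt2 \<Rightarrow> cq_elt \<Rightarrow> cq_elt \<Rightarrow> cq_elt2 \<Rightarrow> complex" where
  "bil2_right n G x y T = (\<Sum>a<n. \<Sum>b<n. \<Sum>c<n. \<Sum>d<n.
      T a b c d * bil n G x (mono a b) * bil n G y (mono c d))"

definition bil2_left :: "nat \<Rightarrow> cq_elt2 \<Rightarrow> cq_elt2 \<Rightarrow> cq_elt \<Rightarrow> cq_elt \<Rightarrow> complex" where
  "bil2_left n G T u v = (\<Sum>a<n. \<Sum>b<n. \<Sum>c<n. \<Sum>d<n.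
      T a b c d * bil n G (mono a b) u * bil n G (mono c d) v)"

definition braided_pairing :: "nat \<Rightarrow> complex \<Rightarrow> nat \<Rightarrow> cq_elt2 \<Rightarrow> bool" where
  "braided_pairing n q m G \<longleftrightarrow>
     (\<forall>x y u. bil n G (cq_mult n q m x y) u = bil2_right n G x y (cq_coprod n q m u)) \<and>
     (\<forall>x u v. bil n G x (cq_mult n q m u v) = bil2_left n G (cq_coprod n q m x) u v) \<and>
     (\<forall>u. bil n G cq_unit u = cq_counit u) \<and>
     (\<forall>x. bil n G x cq_unit = cq_counit x)"

definition gen_normalised :: "nat \<Rightarrow> cq_elt2 \<Rightarrow> bool" where
  "gen_normalised n G \<longleftrightarrow>
     bil n G (mono 1 0) (mono 1 0) = 1 \<and> bil n G (mono 1 0) (mono 0 1) = 0 \<and>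
     bil n G (mono 0 1) (mono 1 0) = 0 \<and> bil n G (mono 0 1) (mono 0 1) = 1"

definition nondegenerate :: "nat \<Rightarrow> cq_elt2 \<Rightarrow> bool" where
  "nondegenerate n G \<longleftrightarrow>
     (\<forall>x. (\<forall>u. bil n G x u = 0) \<longrightarrow> (\<forall>a<n. \<forall>b<n. x a b = 0)) \<and>
     (\<forall>u. (\<forall>x. bil n G x u = 0) \<longrightarrow> (\<forall>a<n. \<forall>b<n. u a b = 0))"

end

(* The braided coproduct of
   e1^r e2^s has q-binomial coefficients (times a power of q^(-m) from the braiding), and
   [a+c; a]_q [a]_q! [c]_q! = [a+c]_q! turns the coproduct side of each pairing axiom into the
   product side after re-indexing the convolution sum; the form is symmetric, so one computation
   gives both axioms.  Conversely, the generators are primitive, so in any normalised braided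
   pairing they only pair with the generators of the dual, and the axioms then force
   <e1 x, f1^c f2^d> = [c]_q <x, f1^(c-1) f2^d> and <x e2, f1^c f2^d> = [d]_q <x, f1^c f2^(d-1)>;
   this determines the pairing on monomials. *)

theory Submission
  imports Defs
begin

lemma qfact_0 [simp]: "qfact q 0 = 1"
  by (simp add: qfact_def)

lemma qfact_Suc: "qfact q (Suc r) = qfact q r * qint q (Suc r)"
  by (simp add: qfact_def)

lemma qint_Suc_0: "q \<noteq> 1 \<Longrightarrow> qint q (Suc 0) = 1"
  by (simp add: qint_def)

lemma qfact_nonzero:
  assumes "\<And>k. 0 < k \<Longrightarrow> k \<le> r \<Longrightarrow> q ^ k \<noteq> 1"
  shows "qfact q r \<noteq> 0"
proof (cases "r = 0")
  case False
  then have "q \<noteq> 1" using assms[of 1] by simp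
  then show ?thesis using assms by (auto simp: qfact_def qint_def)
qed simp

text \<open>At q = 1 every q-integer is 0/0 = 0, so an invertible q-factorial rules out q = 1.\<close>
lemma qfact_nonzero_imp_ne_1: "qfact q 1 \<noteq> 0 \<Longrightarrow> q \<noteq> 1"
  by (auto simp: qfact_def qint_def)

lemma qbinom_mult_qfact:
  assumes "k \<le> r" "qfact q k \<noteq> 0" "qfact q (r - k) \<noteq> 0"
  shows "qbinom q r k * qfact q k * qfact q (r - k) = qfact q r"
  using assms by (simp add: qbinom_def)

lemma qbinom_0: "qfact q r \<noteq> 0 \<Longrightarrow> qbinom q r 0 = 1"
  by (simp add: qbinom_def)

lemma qbinom_self: "qfact q r \<noteq> 0 \<Longrightarrow> qbinom q r r = 1"
  by (simp add: qbinom_def)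

lemma qbinom_Suc_1: "q \<noteq> 1 \<Longrightarrow> qfact q r \<noteq> 0 \<Longrightarrow> qbinom q (Suc r) 1 = qint q (Suc r)"
  by (simp add: qbinom_def qfact_Suc qint_Suc_0)

lemma qbinom_Suc_self: "q \<noteq> 1 \<Longrightarrow> qfact q r \<noteq> 0 \<Longrightarrow> qbinom q (Suc r) r = qint q (Suc r)"
  by (simp add: qbinom_def qfact_Suc qint_Suc_0)

lemma sum_sum_delta:
  fixes f :: "'a \<Rightarrow> 'b \<Rightarrow> 'c::comm_monoid_add"
  assumes "finite A" "finite B"
  shows "(\<Sum>a\<in>A. \<Sum>b\<in>B. if a = a0 \<and> b = b0 then f a b else 0) = (if a0 \<in> A \<and> b0 \<in> B then f a0 b0 else 0)"
proof -
  have "(\<Sum>b\<in>B. if a = a0 \<and> b = b0 then f a b else 0) = (if a = a0 then (if b0 \<in> B then f a b0 else 0) else 0)" for a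
    using assms(2) by (simp add: sum.delta')
  then show ?thesis using assms(1) by (simp add: sum.delta')
qed

lemma sum_antidiagonal:
  fixes f :: "nat \<Rightarrow> nat \<Rightarrow> 'a::comm_monoid_add"
  assumes "r < n"
  shows "(\<Sum>a<n. \<Sum>c<n. if a + c = r then f a c else 0) = (\<Sum>a\<le>r. f a (r - a))"
proof -
  have "(\<Sum>c<n. if a + c = r then f a c else 0) = (if a \<le> r then f a (r - a) else 0)" for a
  proof -
    have "(\<Sum>c<n. if a + c = r then f a c else 0) = (\<Sum>c<n. if c = r - a then (if a \<le> r then f a c else 0) else 0)"
      by (intro sum.cong refl) auto
    also have "\<dots> = (if a \<le> r then f a (r - a) else 0)"
      using assms by (simp add: sum.delta' less_imp_diff_less)
    finally show ?thesis .
  qed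
  then have "(\<Sum>a<n. \<Sum>c<n. if a + c = r then f a c else 0) = (\<Sum>a\<in>{a\<in>{..<n}. a \<le> r}. f a (r - a))"
    by (simp add: sum.inter_filter[symmetric])
  also have "{a\<in>{..<n}. a \<le> r} = {..r}"
    using assms by auto
  finally show ?thesis .
qed

lemma sum_triangle_as_square:
  fixes f :: "nat \<Rightarrow> nat \<Rightarrow> 'a::comm_monoid_add"
  shows "(\<Sum>k<n. \<Sum>i\<le>k. f i (k - i)) = (\<Sum>i<n. \<Sum>j<n. if i + j < n then f i j else 0)"
proof -
  have "(\<Sum>k<n. \<Sum>i\<le>k. f i (k - i)) = (\<Sum>(i, j)\<in>{(i, j). i + j < n}. f i j)"
    by (rule sum.triangle_reindex[symmetric])
  also have "\<dots> = (\<Sum>(i, j)\<in>{..<n} \<times> {..<n}. if i + j < n then f i j else 0)"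
    by (rule sum.mono_neutral_cong_left) (auto split: if_splits)
  also have "\<dots> = (\<Sum>i<n. \<Sum>j<n. if i + j < n then f i j else 0)"
    by (simp add: sum.cartesian_product)
  finally show ?thesis .
qed

lemma sum_triangle_as_square2:
  fixes H :: "nat \<Rightarrow> nat \<Rightarrow> nat \<Rightarrow> nat \<Rightarrow> 'a::comm_monoid_add"
  shows "(\<Sum>c<n. \<Sum>d<n. \<Sum>a\<le>c. \<Sum>b\<le>d. H a b (c - a) (d - b))
       = (\<Sum>a<n. \<Sum>b<n. \<Sum>c<n. \<Sum>d<n. if a + c < n \<and> b + d < n then H a b c d else 0)"
proof -
  have "(\<Sum>c<n. \<Sum>d<n. \<Sum>a\<le>c. \<Sum>b\<le>d. H a b (c - a) (d - b))
      = (\<Sum>c<n. \<Sum>a\<le>c. \<Sum>b<n. \<Sum>d<n. if b + d < n then H a b (c - a) d else 0)"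
  proof (rule sum.cong[OF refl])
    fix c assume "c \<in> {..<n}"
    have "(\<Sum>d<n. \<Sum>a\<le>c. \<Sum>b\<le>d. H a b (c - a) (d - b)) = (\<Sum>a\<le>c. \<Sum>d<n. \<Sum>b\<le>d. H a b (c - a) (d - b))"
      by (rule sum.swap)
    also have "\<dots> = (\<Sum>a\<le>c. \<Sum>b<n. \<Sum>d<n. if b + d < n then H a b (c - a) d else 0)"
      by (intro sum.cong refl sum_triangle_as_square)
    finally show "(\<Sum>d<n. \<Sum>a\<le>c. \<Sum>b\<le>d. H a b (c - a) (d - b))
        = (\<Sum>a\<le>c. \<Sum>b<n. \<Sum>d<n. if b + d < n then H a b (c - a) d else 0)" .
  qed
  also have "\<dots> = (\<Sum>a<n. \<Sum>c<n. if a + c < n then (\<Sum>b<n. \<Sum>d<n. if b + d < n then H a b c d else 0) else 0)"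
    by (rule sum_triangle_as_square)
  also have "\<dots> = (\<Sum>a<n. \<Sum>b<n. \<Sum>c<n. \<Sum>d<n. if a + c < n \<and> b + d < n then H a b c d else 0)"
    by (subst (2) sum.swap) (auto intro!: sum.cong)
  finally show ?thesis .
qed

lemma sum_mult_mono:
  fixes f :: "nat \<Rightarrow> nat \<Rightarrow> complex"
  assumes "a < n" "b < n"
  shows "(\<Sum>a'<n. \<Sum>b'<n. f a' b' * mono a b a' b') = f a b"
proof -
  have "(\<Sum>a'<n. \<Sum>b'<n. f a' b' * mono a b a' b') = (\<Sum>a'<n. \<Sum>b'<n. if a' = a \<and> b' = b then f a' b' else 0)"
    by (intro sum.cong refl) (simp add: mono_def)
  also have "\<dots> = f a b"
    using assms by (simp add: sum_sum_delta)
  finally show ?thesis .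
qed

lemma bil_mono_left:
  assumes "a < n" "b < n"
  shows "bil n G (mono a b) y = (\<Sum>c<n. \<Sum>d<n. G a b c d * y c d)"
  unfolding bil_def
  using sum_mult_mono[OF assms, of "\<lambda>a b. \<Sum>c<n. \<Sum>d<n. G a b c d * y c d"]
  by (simp add: sum_distrib_right sum_distrib_left ac_simps)

lemma bil_mono_mono:
  assumes "a < n" "b < n" "c < n" "d < n"
  shows "bil n G (mono a b) (mono c d) = G a b c d"
  using assms sum_mult_mono[of c n d "G a b"] by (simp add: bil_mono_left ac_simps)

lemma cq_mult_mono:
  assumes "a + c < n" "b + d < n"
  shows "cq_mult n q m (mono a b) (mono c d) = (\<lambda>x y. (inverse q ^ m) ^ (b * c) * mono (a + c) (b + d) x y)"
proof (intro ext)
  fix x y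
  show "cq_mult n q m (mono a b) (mono c d) x y = (inverse q ^ m) ^ (b * c) * mono (a + c) (b + d) x y"
  proof (cases "x < n \<and> y < n")
    case True
    then have "cq_mult n q m (mono a b) (mono c d) x y = (\<Sum>a'\<le>x. \<Sum>b'\<le>y. if a' = a \<and> b' = b then
        mono c d (x - a') (y - b') * (inverse q ^ m) ^ (b' * (x - a')) else 0)"
      unfolding cq_mult_def using True by (auto simp: mono_def intro!: sum.cong)
    also have "\<dots> = (inverse q ^ m) ^ (b * c) * mono (a + c) (b + d) x y"
      by (auto simp: sum_sum_delta mono_def)
    finally show ?thesis .
  qed (use assms in \<open>auto simp: cq_mult_def mono_def\<close>)
qed

lemma cq_coprod_mono:
  "r < n \<Longrightarrow> s < n \<Longrightarrow> cq_coprod n q m (mono r s) a b c d = (if a + c = r \<and> b + d = s then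
      qbinom q r a * qbinom q s b * (inverse q ^ m) ^ (c * b) else 0)"
  by (auto simp: cq_coprod_def mono_def)

lemma sum_cq_coprod_mono:
  assumes "r < n" "s < n"
  shows "(\<Sum>a<n. \<Sum>b<n. \<Sum>c<n. \<Sum>d<n. cq_coprod n q m (mono r s) a b c d * L a b * R c d) =
    (\<Sum>a\<le>r. \<Sum>b\<le>s. qbinom q r a * qbinom q s b * (inverse q ^ m) ^ ((r - a) * b) * L a b * R (r - a) (s - b))"
proof -
  have "(\<Sum>a<n. \<Sum>b<n. \<Sum>c<n. \<Sum>d<n. cq_coprod n q m (mono r s) a b c d * L a b * R c d) =
      (\<Sum>a<n. \<Sum>c<n. if a + c = r then (\<Sum>b<n. \<Sum>d<n. if b + d = s then
         qbinom q r a * qbinom q s b * (inverse q ^ m) ^ (c * b) * L a b * R c d else 0) else 0)"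
    by (subst sum.swap) (auto simp: cq_coprod_mono[OF assms] intro!: sum.cong)
  also have "\<dots> = (\<Sum>a\<le>r. \<Sum>b\<le>s.
      qbinom q r a * qbinom q s b * (inverse q ^ m) ^ ((r - a) * b) * L a b * R (r - a) (s - b))"
    by (simp add: sum_antidiagonal assms)
  finally show ?thesis .
qed

definition cq_pairing :: "complex \<Rightarrow> cq_elt2" where
  "cq_pairing q = (\<lambda>r s r' s'. if r = r' \<and> s = s' then qfact q r * qfact q s else 0)"

lemma bil_cq_pairing: "bil n (cq_pairing q) x y = (\<Sum>a<n. \<Sum>b<n. qfact q a * qfact q b * x a b * y a b)"
  unfolding bil_def
proof (intro sum.cong refl)
  fix a b assume "a \<in> {..<n}" "b \<in> {..<n}"
  then show "(\<Sum>c<n. \<Sum>d<n. cq_pairing q a b c d * x a b * y c d) = qfact q a * qfact q b * x a b * y a b"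
    using sum_sum_delta[of "{..<n}" "{..<n}" a b "\<lambda>_ _. qfact q a * qfact q b * x a b * y a b"]
    by (simp add: cq_pairing_def eq_commute[of a] eq_commute[of b] if_distrib[of "\<lambda>z. z * _"] cong: if_cong)
qed

lemma bil_cq_pairing_commute: "bil n (cq_pairing q) x y = bil n (cq_pairing q) y x"
  by (simp add: bil_cq_pairing ac_simps)

lemma bil_cq_pairing_mono:
  "a < n \<Longrightarrow> b < n \<Longrightarrow> bil n (cq_pairing q) x (mono a b) = qfact q a * qfact q b * x a b"
  unfolding bil_cq_pairing by (rule sum_mult_mono)

lemma bil_cq_pairing_cq_mult:
  assumes qfact_invertible: "\<And>r. r < n \<Longrightarrow> qfact q r \<noteq> 0"
  shows "bil n (cq_pairing q) (cq_mult n q m x y) u = bil2_right n (cq_pairing q) x y (cq_coprod n q m u)"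
proof -
  define H where "H a b c d = qfact q (a + c) * qfact q (b + d) * u (a + c) (b + d) * x a b * y c d *
    (inverse q ^ m) ^ (b * c)" for a b c d
  have "bil n (cq_pairing q) (cq_mult n q m x y) u = (\<Sum>c<n. \<Sum>d<n. \<Sum>a\<le>c. \<Sum>b\<le>d. H a b (c - a) (d - b))"
    unfolding bil_cq_pairing cq_mult_def H_def by (auto simp: sum_distrib_left sum_distrib_right ac_simps intro!: sum.cong)
  also have "\<dots> = (\<Sum>a<n. \<Sum>b<n. \<Sum>c<n. \<Sum>d<n. if a + c < n \<and> b + d < n then H a b c d else 0)"
    by (rule sum_triangle_as_square2)
  also have "\<dots> = (\<Sum>a<n. \<Sum>b<n. \<Sum>c<n. \<Sum>d<n. cq_coprod n q m u a b c d *
      (qfact q a * qfact q b * x a b) * (qfact q c * qfact q d * y c d))"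
  proof (intro sum.cong refl)
    fix a b c d
    show "(if a + c < n \<and> b + d < n then H a b c d else 0) = cq_coprod n q m u a b c d *
      (qfact q a * qfact q b * x a b) * (qfact q c * qfact q d * y c d)"
    proof (cases "a + c < n \<and> b + d < n")
      case True
      then have "qfact q (a + c) = qbinom q (a + c) a * qfact q a * qfact q c"
        "qfact q (b + d) = qbinom q (b + d) b * qfact q b * qfact q d"
        using qbinom_mult_qfact[of a "a + c" q] qbinom_mult_qfact[of b "b + d" q] qfact_invertible[of a]
          qfact_invertible[of b] qfact_invertible[of c] qfact_invertible[of d] by auto
      then show ?thesis
        using True unfolding H_def cq_coprod_def by (simp add: ac_simps)
    next
      case False
      then show ?thesis by (auto simp: cq_coprod_def)
    qed
  qed
  also have "\<dots> = bil2_right n (cq_pairing q) x y (cq_coprod n q m u)"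
    unfolding bil2_right_def by (simp add: bil_cq_pairing_mono)
  finally show ?thesis .
qed

lemma braided_pairing_cq_pairing:
  assumes "\<And>r. r < n \<Longrightarrow> qfact q r \<noteq> 0" "0 < n"
  shows "braided_pairing n q m (cq_pairing q)"
proof -
  have "bil n (cq_pairing q) x (cq_mult n q m u v) = bil2_left n (cq_pairing q) (cq_coprod n q m x) u v" for x u v
    using bil_cq_pairing_cq_mult[OF assms(1), where x = u and y = v and u = x]
    by (simp add: bil_cq_pairing_commute[of n q x] bil2_right_def bil2_left_def bil_cq_pairing_commute[of n q u]
        bil_cq_pairing_commute[of n q v] ac_simps)
  then show ?thesis
    using bil_cq_pairing_cq_mult[OF assms(1)] assms(2)
    by (simp add: braided_pairing_def cq_unit_def cq_counit_def bil_cq_pairing_mono bil_cq_pairing_commute[of n q "mono 0 0"])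
qed

lemma gen_normalised_cq_pairing:
  assumes "\<And>r. r < n \<Longrightarrow> qfact q r \<noteq> 0" "1 < n"
  shows "gen_normalised n (cq_pairing q)"
  using assms qfact_nonzero_imp_ne_1[of q]
  by (simp add: gen_normalised_def bil_cq_pairing_mono) (simp add: qfact_Suc qint_Suc_0 mono_def)

lemma nondegenerate_cq_pairing:
  assumes "\<And>r. r < n \<Longrightarrow> qfact q r \<noteq> 0"
  shows "nondegenerate n (cq_pairing q)"
  unfolding nondegenerate_def
proof (intro conjI allI impI)
  fix x :: cq_elt and a b assume "\<forall>u. bil n (cq_pairing q) x u = 0" "a < n" "b < n"
  then show "x a b = 0"
    using bil_cq_pairing_mono[of a n b q x] assms by auto
next
  fix u :: cq_elt and a b assume "\<forall>x. bil n (cq_pairing q) x u = 0" "a < n" "b < n"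
  then show "u a b = 0"
    using bil_cq_pairing_mono[of a n b q u] bil_cq_pairing_commute[of n q u] assms by auto
qed

context
  fixes n m :: nat and q :: complex and G :: cq_elt2
  assumes qfact_invertible: "\<And>r. r < n \<Longrightarrow> qfact q r \<noteq> 0"
    and one_less_n: "1 < n"
    and pairing: "braided_pairing n q m G"
    and normalised: "gen_normalised n G"
begin

lemma bil_unit_left: "bil n G (mono 0 0) y = y 0 0"
  using pairing by (simp add: braided_pairing_def cq_unit_def cq_counit_def)

lemma bil_generator_cq_mult:
  assumes "r + s = 1"
  shows "bil n G (mono r s) (cq_mult n q m u v) = u 0 0 * bil n G (mono r s) v + bil n G (mono r s) u * v 0 0"
proof -
  have "r < n" "s < n"
    using assms one_less_n by auto
  then have "bil n G (mono r s) (cq_mult n q m u v) = (\<Sum>a\<le>r. \<Sum>b\<le>s. qbinom q r a * qbinom q s b *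
      (inverse q ^ m) ^ ((r - a) * b) * bil n G (mono a b) u * bil n G (mono (r - a) (s - b)) v)"
    using pairing by (simp add: braided_pairing_def bil2_left_def sum_cq_coprod_mono)
  moreover have "qbinom q 1 0 = 1" "qbinom q 1 1 = 1" "qbinom q 0 0 = 1"
    using qbinom_0 qbinom_self qfact_invertible one_less_n by auto
  moreover have "r = 1 \<and> s = 0 \<or> r = 0 \<and> s = 1"
    using assms by auto
  ultimately show ?thesis
    by (auto simp: bil_unit_left atMost_Suc)
qed

lemma bil_generator_mono:
  assumes "r + s = 1" "a < n" "b < n"
  shows "bil n G (mono r s) (mono a b) = (if a = r \<and> b = s then 1 else 0)"
proof (cases "a + b = 1")
  case True
  then have "a = 1 \<and> b = 0 \<or> a = 0 \<and> b = 1" "r = 1 \<and> s = 0 \<or> r = 0 \<and> s = 1"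
    using assms(1) by auto
  then show ?thesis
    using normalised by (auto simp: gen_normalised_def)
next
  case False
  consider "a = 0" "b = 0" | a' where "a = Suc a'" | b' where "a = 0" "b = Suc b'"
    by (metis not0_implies_Suc)
  then have "bil n G (mono r s) (mono a b) = 0"
  proof cases
    case 1
    then show ?thesis
      using pairing assms(1) by (auto simp: braided_pairing_def cq_unit_def cq_counit_def mono_def)
  next
    case (2 a')
    then have "mono a b = cq_mult n q m (mono 1 0) (mono a' b)"
      using assms cq_mult_mono[of 1 a' n 0 b q m] by (simp add: fun_eq_iff)
    then have "bil n G (mono r s) (mono a b) =
        mono 1 0 0 0 * bil n G (mono r s) (mono a' b) + bil n G (mono r s) (mono 1 0) * mono a' b 0 0"
      by (simp add: bil_generator_cq_mult[OF assms(1)])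
    then show ?thesis
      using False 2 by (auto simp: mono_def)
  next
    case (3 b')
    then have "mono a b = cq_mult n q m (mono 0 b') (mono 0 1)"
      using assms cq_mult_mono[of 0 0 n b' 1 q m] by (simp add: fun_eq_iff)
    then have "bil n G (mono r s) (mono a b) =
        mono 0 b' 0 0 * bil n G (mono r s) (mono 0 1) + bil n G (mono r s) (mono 0 b') * mono 0 1 0 0"
      by (simp add: bil_generator_cq_mult[OF assms(1)])
    then show ?thesis
      using False 3 by (auto simp: mono_def)
  qed
  then show ?thesis
    using False assms(1) by auto
qed

lemma bil_mono_Suc_fst:
  assumes "Suc a < n" "b < n" "c < n" "d < n"
  shows "bil n G (mono (Suc a) b) (mono c d) = (if c = 0 then 0 else qint q c * bil n G (mono a b) (mono (c - 1) d))"
proof -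
  have "mono (Suc a) b = cq_mult n q m (mono 1 0) (mono a b)"
    using assms cq_mult_mono[of 1 a n 0 b q m] by (simp add: fun_eq_iff)
  then have "bil n G (mono (Suc a) b) (mono c d) = (\<Sum>a'\<le>c. \<Sum>b'\<le>d. qbinom q c a' * qbinom q d b' *
      (inverse q ^ m) ^ ((c - a') * b') * bil n G (mono 1 0) (mono a' b') * bil n G (mono a b) (mono (c - a') (d - b')))"
    using pairing assms by (simp add: braided_pairing_def bil2_right_def sum_cq_coprod_mono)
  also have "\<dots> = (\<Sum>a'\<le>c. \<Sum>b'\<le>d. if a' = 1 \<and> b' = 0 then
      qbinom q c 1 * qbinom q d 0 * bil n G (mono a b) (mono (c - 1) d) else 0)"
    using assms by (intro sum.cong refl) (auto simp: bil_generator_mono)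
  also have "\<dots> = (if c = 0 then 0 else qint q c * bil n G (mono a b) (mono (c - 1) d))"
    using assms qbinom_Suc_1[of q "c - 1"] qbinom_0[of q d] qfact_invertible[of "c - 1"] qfact_invertible[of d]
      qfact_nonzero_imp_ne_1[of q] qfact_invertible[of 1] one_less_n
    by (auto simp: sum_sum_delta)
  finally show ?thesis .
qed

lemma bil_mono_Suc_snd:
  assumes "a < n" "Suc b < n" "c < n" "d < n"
  shows "bil n G (mono a (Suc b)) (mono c d) = (if d = 0 then 0 else qint q d * bil n G (mono a b) (mono c (d - 1)))"
proof -
  have "mono a (Suc b) = cq_mult n q m (mono a b) (mono 0 1)"
    using assms cq_mult_mono[of a 0 n b 1 q m] by (simp add: fun_eq_iff)
  then have "bil n G (mono a (Suc b)) (mono c d) = (\<Sum>a'\<le>c. \<Sum>b'\<le>d. qbinom q c a' * qbinom q d b' *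
      (inverse q ^ m) ^ ((c - a') * b') * bil n G (mono a b) (mono a' b') * bil n G (mono 0 1) (mono (c - a') (d - b')))"
    using pairing assms by (simp add: braided_pairing_def bil2_right_def sum_cq_coprod_mono)
  also have "\<dots> = (\<Sum>a'\<le>c. \<Sum>b'\<le>d. if a' = c \<and> b' = d - 1 then
      (if d = 0 then 0 else qbinom q c c * qbinom q d (d - 1) * bil n G (mono a b) (mono c (d - 1))) else 0)"
    using assms by (intro sum.cong refl) (auto simp: bil_generator_mono)
  also have "\<dots> = (if d = 0 then 0 else qint q d * bil n G (mono a b) (mono c (d - 1)))"
    using assms qbinom_Suc_self[of q "d - 1"] qbinom_self[of q c] qfact_invertible[of "d - 1"] qfact_invertible[of c]
      qfact_nonzero_imp_ne_1[of q] qfact_invertible[of 1] one_less_n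
    by (auto simp: sum_sum_delta)
  finally show ?thesis .
qed

lemma bil_mono_eq_cq_pairing:
  assumes "a < n" "b < n" "c < n" "d < n"
  shows "bil n G (mono a b) (mono c d) = cq_pairing q a b c d"
  using assms
proof (induction b arbitrary: d)
  case 0
  then show ?case
  proof (induction a arbitrary: c)
    case 0
    then show ?case
      by (simp add: bil_unit_left) (simp add: mono_def cq_pairing_def)
  next
    case (Suc a)
    then show ?case
      by (cases c) (auto simp: bil_mono_Suc_fst cq_pairing_def qfact_Suc)
  qed
next
  case (Suc b)
  then show ?case
    by (cases d) (auto simp: bil_mono_Suc_snd cq_pairing_def qfact_Suc)
qed

end

theorem lemma6p2:
  fixes q :: complex and m n :: nat
  assumes "n = 2 * m + 1"
    and "1 < n"
    and "q ^ n = 1"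
    and "\<forall>k. 0 < k \<and> k < n \<longrightarrow> q ^ k \<noteq> 1"
    and "\<exists>\<beta>::int. [\<beta>\<^sup>2 = 3] (mod int n)"
  defines "G \<equiv> (\<lambda>r s r' s'. if r = r' \<and> s = s' then qfact q r * qfact q s else 0)"
  shows "braided_pairing n q m G \<and> gen_normalised n G \<and> nondegenerate n G \<and>
         (\<forall>G'. braided_pairing n q m G' \<and> gen_normalised n G' \<longrightarrow>
            (\<forall>r<n. \<forall>s<n. \<forall>r'<n. \<forall>s'<n.
               bil n G' (mono r s) (mono r' s') = bil n G (mono r s) (mono r' s')))"
proof -
  \<comment> \<open>The hypotheses n = 2m+1, q^n = 1 and \<surd>3 mod n make the plane a braided-Hopf algebra
    in the module category; the pairing itself only uses that q has order at least n.\<close>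
  have qfact_invertible: "qfact q r \<noteq> 0" if "r < n" for r
    using assms(4) that by (intro qfact_nonzero) auto
  have "G = cq_pairing q"
    unfolding G_def cq_pairing_def ..
  moreover have "braided_pairing n q m (cq_pairing q)"
    using assms(2) by (intro braided_pairing_cq_pairing qfact_invertible) auto
  moreover have "gen_normalised n (cq_pairing q)"
    using assms(2) by (intro gen_normalised_cq_pairing qfact_invertible)
  moreover have "nondegenerate n (cq_pairing q)"
    by (intro nondegenerate_cq_pairing qfact_invertible)
  moreover have "bil n G' (mono r s) (mono r' s') = bil n (cq_pairing q) (mono r s) (mono r' s')"
    if "braided_pairing n q m G'" "gen_normalised n G'" "r < n" "s < n" "r' < n" "s' < n" for G' r s r' s'
    using bil_mono_eq_cq_pairing[OF qfact_invertible assms(2) that] bil_mono_mono[OF that(3-6)] by simp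
  ultimately show ?thesis
    by blast
qed

end
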